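(* Let $K$ be a field of characteristic different from $2$, let $V=K^2$, and let $f:V\to V$ be the linear map with matrix $\begin{pmatrix}0&1\\0&0\end{pmatrix}$ in the standard basis (so $f\circ f=0$). Then the algebra $A=A(f,f,f,f)$ is associative and commutative, and the linear map $D:A\to A$ given by $D(e)=0$, $D(a)=0$, $D(v)=v$, $D(v')=-v'$ ($v\in V$) is a $(-1)$-derivation of $A$, i.e. $D(xy)=-D(x)y-xD(y)$ for all $x,y\in A$. Its eigenspace decomposition $A=A_0\oplus A_1\oplus A_{-1}$ with $A_0=Ke\oplus Ka$, $A_1=V$, $A_{-1}=V'$ is a non-semigroup grading of $A$: the induced partial operation on $\{0,1,-1\}$ satisfies $0*0=0$, $0*1=1*0=-1$, $0*(-1)=(-1)*0=1$, and so $(0*0)*(-1)=1\ne -1=0*(0*(-1))$.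
   Context: Let $V'$ be a second copy of $V$, identified with $V$ via a linear bijection $v\mapsto v'$. For linear maps $f_L,f_R,g_L,g_R:V\to V$, the algebra $A(f_L,f_R,g_L,g_R)$ is the vector space $Ke\oplus Ka\oplus V\oplus V'$ (with $e,a$ two new basis elements) with bilinear multiplication determined by $e^2=e$, $a^2=0$, $av=f_L(v)'$, $va=f_R(v)'$, $av'=g_L(v)$, $v'a=g_R(v)$ for $v\in V$, and all other products among $e$, $a$, elements of $V$ and elements of $V'$ equal to zero. A grading of $A$ over a set $\Gamma$ is a decomposition $A=\bigoplus_{g\in\Gamma}A_g$ together with a partial binary operation $*$ on $\Gamma$, defined for exactly those pairs $(g,h)$ with $A_gA_h\ne0$, such that $A_gA_h\subseteq A_{g*h}$ in that case. The grading is a semigroup grading if there is a semigroup $(G,\cdot)$ and an injective map $\Gamma\to G$ under which $g*h=g\cdot h$ whenever $A_gA_h\ne0$; otherwise it is a non-semigroup grading. *)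

theory Defs
  imports Main "HOL-Library.Product_Plus"
begin

text \<open>Elements of A = Ke + Ka + V + V' with V = K^2 are represented as tuples
  (coefficient of e, coefficient of a, v, w) standing for c e + d a + v + w'.\<close>
type_synonym 'k vec2 = "'k \<times> 'k"
type_synonym 'k alg = "'k \<times> 'k \<times> 'k vec2 \<times> 'k vec2"

definition vsmul :: "'k::field \<Rightarrow> 'k vec2 \<Rightarrow> 'k vec2" where
  "vsmul c v = (c * fst v, c * snd v)"

definition alg_smul :: "'k::field \<Rightarrow> 'k alg \<Rightarrow> 'k alg" where
  "alg_smul c x = (case x of (ce, ca, v, w) \<Rightarrow> (c * ce, c * ca, vsmul c v, vsmul c w))"

text \<open>Multiplication of A(fL,fR,gL,gR): e^2 = e, a^2 = 0, a v = fL(v)', v a = fR(v)',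
  a v' = gL(v), v' a = gR(v), all other products of basis parts zero.\<close>
definition Amul :: "('k vec2 \<Rightarrow> 'k vec2) \<Rightarrow> ('k vec2 \<Rightarrow> 'k vec2) \<Rightarrow>
    ('k vec2 \<Rightarrow> 'k vec2) \<Rightarrow> ('k vec2 \<Rightarrow> 'k vec2) \<Rightarrow> 'k::field alg \<Rightarrow> 'k alg \<Rightarrow> 'k alg" where
  "Amul fL fR gL gR x y =
     (case x of (e1, a1, v1, w1) \<Rightarrow> case y of (e2, a2, v2, w2) \<Rightarrow>
       (e1 * e2, 0, vsmul a1 (gL w2) + vsmul a2 (gR w1), vsmul a1 (fL v2) + vsmul a2 (fR v1)))"

definition nilf :: "'k::field vec2 \<Rightarrow> 'k vec2" where
  "nilf v = (snd v, 0)"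

abbreviation Anil :: "'k::field alg \<Rightarrow> 'k alg \<Rightarrow> 'k alg" where
  "Anil \<equiv> Amul nilf nilf nilf nilf"

definition Dmap :: "'k::field alg \<Rightarrow> 'k alg" where
  "Dmap x = (case x of (ce, ca, v, w) \<Rightarrow> (0, 0, v, - w))"

definition eigsp :: "('k::field alg \<Rightarrow> 'k alg) \<Rightarrow> 'k \<Rightarrow> 'k alg set" where
  "eigsp T c = {x. T x = alg_smul c x}"

definition is_subspace :: "'k::field alg set \<Rightarrow> bool" where
  "is_subspace S \<longleftrightarrow> 0 \<in> S \<and> (\<forall>x\<in>S. \<forall>y\<in>S. x + y \<in> S) \<and> (\<forall>c. \<forall>x\<in>S. alg_smul c x \<in> S)"

text \<open>A grading of the algebra (whole carrier, multiplication mul) over a finite set \<Gamma>: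
  a direct sum decomposition into subspaces cmp g (g \<in> \<Gamma>) together with a partial
  binary operation op on \<Gamma> (None = undefined), defined exactly when cmp g * cmp h \<noteq> 0,
  and then cmp g * cmp h \<subseteq> cmp (g*h).\<close>
definition is_grading :: "('k::field alg \<Rightarrow> 'k alg \<Rightarrow> 'k alg) \<Rightarrow> 'g set \<Rightarrow> ('g \<Rightarrow> 'k alg set)
    \<Rightarrow> ('g \<Rightarrow> 'g \<Rightarrow> 'g option) \<Rightarrow> bool" where
  "is_grading mul \<Gamma> cmp op \<longleftrightarrow>
     finite \<Gamma> \<and>
     (\<forall>g\<in>\<Gamma>. is_subspace (cmp g)) \<and>
     (\<forall>x. \<exists>!c. (\<forall>g\<in>\<Gamma>. c g \<in> cmp g) \<and> (\<forall>g. g \<notin> \<Gamma> \<longrightarrow> c g = 0) \<and> x = (\<Sum>g\<in>\<Gamma>. c g)) \<and>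
     (\<forall>g\<in>\<Gamma>. \<forall>h\<in>\<Gamma>.
        (op g h \<noteq> None \<longleftrightarrow> (\<exists>x\<in>cmp g. \<exists>y\<in>cmp h. mul x y \<noteq> 0)) \<and>
        (\<forall>k. op g h = Some k \<longrightarrow> k \<in> \<Gamma> \<and> (\<forall>x\<in>cmp g. \<forall>y\<in>cmp h. mul x y \<in> cmp k)))"

text \<open>The semigroup is a type of class
  semigroup_mult; the theorem quantifies over all such types.\<close>
definition semigroup_grading_into :: "'g set \<Rightarrow> ('g \<Rightarrow> 'g \<Rightarrow> 'g option) \<Rightarrow> ('g \<Rightarrow> 's::semigroup_mult) \<Rightarrow> bool" where
  "semigroup_grading_into \<Gamma> op \<iota> \<longleftrightarrow> inj_on \<iota> \<Gamma> \<and>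
     (\<forall>g\<in>\<Gamma>. \<forall>h\<in>\<Gamma>. \<forall>k. op g h = Some k \<longrightarrow> \<iota> k = \<iota> g * \<iota> h)"

end

theory Submission
  imports Defs
begin

text \<open>Since \<open>f \<circ> f = 0\<close> and \<open>f\<close> is used on both sides and in both directions, the
  product of \<open>A(f,f,f,f)\<close> is given in coordinates by a bilinear formula that is visibly
  symmetric, and any product of three elements vanishes except for \<open>e\<^sup>3 = e\<close>; this gives
  associativity and commutativity.  \<open>D\<close> acts by \<open>0, 1, -1\<close> on \<open>Ke \<oplus> Ka\<close>, \<open>V\<close>, \<open>V'\<close>,
  and being a \<open>(-1)\<close>-derivation it maps \<open>A\<^sub>g A\<^sub>h\<close> into \<open>A\<^bsub>-(g+h)\<^esub>\<close>.  The partial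
  operation of a grading is determined by its components, so here it is forced to be
  \<open>g * h = -(g + h)\<close> when \<open>g = 0\<close> or \<open>h = 0\<close> and undefined otherwise; then
  \<open>(0 * 0) * (-1) = 1 \<noteq> -1 = 0 * (0 * (-1))\<close>, and an injective multiplicative map into
  a semigroup would identify \<open>1\<close> and \<open>-1\<close>.\<close>

lemma grading_component_inter_eq_zero:
  fixes cmp :: "'g \<Rightarrow> 'k::field alg set"
  assumes grad: "is_grading mul \<Gamma> cmp op"
    and "g \<in> \<Gamma>" "h \<in> \<Gamma>" "g \<noteq> h" "x \<in> cmp g" "x \<in> cmp h"
  shows "x = 0"
proof -
  have fin: "finite \<Gamma>" and zero: "\<And>k. k \<in> \<Gamma> \<Longrightarrow> 0 \<in> cmp k"
    using grad by (auto simp: is_grading_def is_subspace_def)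
  have uniq: "\<exists>!c. (\<forall>k\<in>\<Gamma>. c k \<in> cmp k) \<and> (\<forall>k. k \<notin> \<Gamma> \<longrightarrow> c k = 0) \<and> x = (\<Sum>k\<in>\<Gamma>. c k)"
    using grad unfolding is_grading_def by (elim conjE) (erule spec)
  define single where "single l = (\<lambda>k. if k = l then x else 0)" for l :: 'g
  have decomposes: "(\<forall>k\<in>\<Gamma>. single l k \<in> cmp k) \<and> (\<forall>k. k \<notin> \<Gamma> \<longrightarrow> single l k = 0)
      \<and> x = (\<Sum>k\<in>\<Gamma>. single l k)" if "l \<in> {g, h}" for l
    using that assms fin zero by (auto simp: single_def)
  have "single g = single h"
    using uniq decomposes[of g] decomposes[of h] by blast
  then have "single g g = single h g" by simp
  with \<open>g \<noteq> h\<close> show "x = 0" by (simp add: single_def)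
qed

lemma is_grading_op_defined_iff:
  assumes "is_grading mul \<Gamma> cmp op" "g \<in> \<Gamma>" "h \<in> \<Gamma>"
  shows "op g h \<noteq> None \<longleftrightarrow> (\<exists>x\<in>cmp g. \<exists>y\<in>cmp h. mul x y \<noteq> 0)"
  using assms unfolding is_grading_def by blast

lemma is_grading_op_SomeD:
  assumes "is_grading mul \<Gamma> cmp op" "g \<in> \<Gamma>" "h \<in> \<Gamma>" "op g h = Some k"
  shows "k \<in> \<Gamma>" "\<And>x y. x \<in> cmp g \<Longrightarrow> y \<in> cmp h \<Longrightarrow> mul x y \<in> cmp k"
  using assms unfolding is_grading_def by blast+

lemma grading_op_unique:
  assumes grad1: "is_grading mul \<Gamma> cmp op1" and grad2: "is_grading mul \<Gamma> cmp op2"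
    and g: "g \<in> \<Gamma>" and h: "h \<in> \<Gamma>"
  shows "op1 g h = op2 g h"
proof (cases "op1 g h")
  case None
  then show ?thesis
    using is_grading_op_defined_iff[OF grad1 g h] is_grading_op_defined_iff[OF grad2 g h] by simp
next
  case (Some k)
  then obtain x y where xy: "x \<in> cmp g" "y \<in> cmp h" "mul x y \<noteq> 0"
    using is_grading_op_defined_iff[OF grad1 g h] by auto
  then obtain k' where k': "op2 g h = Some k'"
    using is_grading_op_defined_iff[OF grad2 g h] by auto
  have "k' = k"
  proof (rule ccontr)
    assume "k' \<noteq> k"
    moreover have "k \<in> \<Gamma>" "mul x y \<in> cmp k"
      using is_grading_op_SomeD[OF grad1 g h Some] xy by blast+
    moreover have "k' \<in> \<Gamma>" "mul x y \<in> cmp k'"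
      using is_grading_op_SomeD[OF grad2 g h k'] xy by blast+
    ultimately show False
      using grading_component_inter_eq_zero[OF grad2] xy(3) by blast
  qed
  with Some k' show ?thesis by simp
qed

lemma not_semigroup_grading_into:
  assumes "a \<in> \<Gamma>" "b \<in> \<Gamma>" "c \<in> \<Gamma>" "b \<noteq> c"
    and "op a a = Some a" "op a b = Some c" "op a c = Some b"
  shows "\<not> semigroup_grading_into \<Gamma> op \<iota>"
proof
  assume "semigroup_grading_into \<Gamma> op \<iota>"
  then have inj: "inj_on \<iota> \<Gamma>"
    and hom: "\<And>g h k. g \<in> \<Gamma> \<Longrightarrow> h \<in> \<Gamma> \<Longrightarrow> op g h = Some k \<Longrightarrow> \<iota> k = \<iota> g * \<iota> h"
    unfolding semigroup_grading_into_def by blast+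
  have "\<iota> b = \<iota> a * \<iota> c" using hom assms by blast
  also have "\<dots> = (\<iota> a * \<iota> a) * \<iota> c" using hom assms by metis
  also have "\<dots> = \<iota> a * \<iota> b" using hom assms by (metis mult.assoc)
  also have "\<dots> = \<iota> c" using hom assms by metis
  finally show False
    using inj assms by (meson inj_onD)
qed

lemma alg_smul_add: "alg_smul c (x + y) = alg_smul c x + alg_smul c (y :: 'k::field alg)"
  by (simp add: alg_smul_def vsmul_def split_beta distrib_left)

lemma alg_smul_commute: "alg_smul c (alg_smul d x) = alg_smul d (alg_smul c (x :: 'k::field alg))"
  by (simp add: alg_smul_def vsmul_def split_beta mult.left_commute)

lemma alg_smul_zero: "alg_smul c (0 :: 'k::field alg) = 0"
  by (simp add: alg_smul_def vsmul_def zero_prod_def)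

lemma is_subspace_eigsp:
  assumes add: "\<And>x y. T (x + y) = T x + T y"
    and smul: "\<And>c x. T (alg_smul c x) = alg_smul c (T x)"
  shows "is_subspace (eigsp T \<alpha>)"
proof -
  have "T 0 = 0" using add[of 0 0] by simp
  then show ?thesis
    unfolding is_subspace_def eigsp_def by (simp add: add smul alg_smul_add alg_smul_commute alg_smul_zero)
qed

lemma Anil_coords:
  "Anil ((e1, a1, (p1, q1), (r1, s1)) :: 'k::field alg) (e2, a2, (p2, q2), (r2, s2)) =
     (e1 * e2, 0, (a1 * s2 + a2 * s1, 0), (a1 * q2 + a2 * q1, 0))"
  by (simp add: Amul_def vsmul_def nilf_def)

lemma Dmap_add: "Dmap (x + y) = Dmap x + Dmap (y :: 'k::field alg)"
  by (simp add: Dmap_def split_beta)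

lemma Dmap_alg_smul: "Dmap (alg_smul c x) = alg_smul c (Dmap (x :: 'k::field alg))"
  by (simp add: Dmap_def alg_smul_def vsmul_def split_beta)

lemma Anil_assoc: "Anil (Anil x y) z = Anil x (Anil y (z :: 'k::field alg))"
  by (simp add: Amul_def vsmul_def nilf_def split_beta)

lemma Anil_commute: "Anil x y = Anil y (x :: 'k::field alg)"
  by (simp add: Amul_def vsmul_def nilf_def split_beta add.commute mult.commute)

lemma Dmap_Anil: "Dmap (Anil x y) = - Anil (Dmap x) y - Anil x (Dmap (y :: 'k::field alg))"
  by (simp add: Amul_def vsmul_def nilf_def Dmap_def split_beta algebra_simps)

lemma eigsp_Dmap_0: "eigsp (Dmap :: 'k::field alg \<Rightarrow> 'k alg) 0 = {(c, d, 0, 0) | c d. True}"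
  by (auto simp: eigsp_def Dmap_def alg_smul_def vsmul_def zero_prod_def)

lemma eigsp_Dmap_1:
  assumes "(2::'k::field) \<noteq> 0"
  shows "eigsp (Dmap :: 'k alg \<Rightarrow> 'k alg) 1 = {(0, 0, v, 0) | v. True}"
  using assms by (auto simp: eigsp_def Dmap_def alg_smul_def vsmul_def zero_prod_def)

lemma eigsp_Dmap_minus_1:
  assumes "(2::'k::field) \<noteq> 0"
  shows "eigsp (Dmap :: 'k alg \<Rightarrow> 'k alg) (-1) = {(0, 0, 0, w) | w. True}"
  using assms by (auto simp: eigsp_def Dmap_def alg_smul_def vsmul_def zero_prod_def)

lemma Anil_mem_eigsp_Dmap:
  assumes "x \<in> eigsp Dmap \<alpha>" "y \<in> eigsp Dmap \<beta>"
  shows "Anil x y \<in> eigsp Dmap (- (\<alpha> + \<beta>) :: 'k::field)"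
  using assms Dmap_Anil[of x y]
  by (simp add: eigsp_def Amul_def vsmul_def nilf_def alg_smul_def split_beta algebra_simps)

definition Dmap_grading_op :: "int \<Rightarrow> int \<Rightarrow> int option" where
  "Dmap_grading_op g h = (if g = 0 \<or> h = 0 then Some (- (g + h)) else None)"

lemma Dmap_eigen_decomposition:
  assumes "(2::'k::field) \<noteq> 0"
  shows "\<exists>!c. (\<forall>g\<in>{0, 1, -1}. c g \<in> eigsp Dmap (of_int g))
    \<and> (\<forall>g. g \<notin> {0, 1, -1::int} \<longrightarrow> c g = 0) \<and> (x :: 'k alg) = (\<Sum>g\<in>{0, 1, -1}. c g)"
proof -
  note eigsp = eigsp_Dmap_0 eigsp_Dmap_1[OF assms] eigsp_Dmap_minus_1[OF assms]
  obtain e a v w where x: "x = (e, a, v, w)" by (cases x) auto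
  let ?c = "\<lambda>g::int. if g = 0 then (e, a, 0, 0) else if g = 1 then (0, 0, v, 0)
     else if g = -1 then (0, 0, 0, w) else (0::'k alg)"
  show ?thesis
  proof (rule ex1I[of _ ?c])
    show "(\<forall>g\<in>{0, 1, -1}. ?c g \<in> eigsp Dmap (of_int g))
      \<and> (\<forall>g. g \<notin> {0, 1, -1::int} \<longrightarrow> ?c g = 0) \<and> x = (\<Sum>g\<in>{0, 1, -1}. ?c g)"
      by (auto simp: eigsp x zero_prod_def)
  next
    fix c assume c: "(\<forall>g\<in>{0, 1, -1}. c g \<in> eigsp Dmap (of_int g))
      \<and> (\<forall>g. g \<notin> {0, 1, -1::int} \<longrightarrow> c g = 0) \<and> x = (\<Sum>g\<in>{0, 1, -1}. c g)"
    then obtain e' a' v' w' where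
      c_parts: "c 0 = (e', a', 0, 0)" "c 1 = (0, 0, v', 0)" "c (-1) = (0, 0, 0, w')"
      by (auto simp: eigsp)
    with c have "e' = e \<and> a' = a \<and> v' = v \<and> w' = w"
      by (auto simp: x zero_prod_def)
    with c c_parts show "c = ?c" by auto
  qed
qed

lemma Dmap_grading_op_iff_nonzero_product:
  assumes "(2::'k::field) \<noteq> 0" "g \<in> {0, 1, -1}" "h \<in> {0, 1, -1}"
  shows "Dmap_grading_op g h \<noteq> None \<longleftrightarrow>
    (\<exists>x\<in>eigsp Dmap (of_int g). \<exists>y\<in>eigsp Dmap (of_int h). Anil x y \<noteq> (0::'k alg))"
proof -
  note eigsp = eigsp_Dmap_0 eigsp_Dmap_1[OF assms(1)] eigsp_Dmap_minus_1[OF assms(1)]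
  have nonzero: "\<exists>x\<in>eigsp Dmap (of_int g). \<exists>y\<in>eigsp Dmap (of_int h). Anil x y \<noteq> (0::'k alg)"
    if "g = 0 \<or> h = 0"
  proof -
    define e :: "'k alg" where "e = (1, 0, 0, 0)"
    define a :: "'k alg" where "a = (0, 1, 0, 0)"
    define v :: "'k alg" where "v = (0, 0, (0, 1), 0)"
    define w :: "'k alg" where "w = (0, 0, 0, (0, 1))"
    have degrees: "e \<in> eigsp Dmap 0" "a \<in> eigsp Dmap 0"
        "v \<in> eigsp Dmap 1" "w \<in> eigsp Dmap (-1)"
      by (simp_all add: eigsp e_def a_def v_def w_def)
    have products: "Anil e e \<noteq> 0" "Anil a v \<noteq> 0" "Anil a w \<noteq> 0"
      by (simp_all add: e_def a_def v_def w_def Anil_coords[unfolded zero_prod_def] zero_prod_def)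
    then have "Anil v a \<noteq> 0" "Anil w a \<noteq> 0"
      by (simp_all add: Anil_commute[of _ a])
    with products degrees that assms(2,3) show ?thesis
      by auto blast+
  qed
  have zero: "Anil x y = (0::'k alg)"
    if "g \<noteq> 0" "h \<noteq> 0" "x \<in> eigsp Dmap (of_int g)" "y \<in> eigsp Dmap (of_int h)" for x y
    using that assms(2,3) by (auto simp: eigsp Anil_coords zero_prod_def)
  show ?thesis
    unfolding Dmap_grading_op_def using nonzero zero by auto
qed

lemma is_grading_Dmap:
  assumes "(2::'k::field) \<noteq> 0"
  shows "is_grading (Anil :: 'k alg \<Rightarrow> 'k alg \<Rightarrow> 'k alg) {0, 1, -1}
    (\<lambda>g. eigsp Dmap (of_int g)) Dmap_grading_op"
  unfolding is_grading_def
proof (intro conjI ballI allI impI)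
  fix g h k :: int
  assume g: "g \<in> {0, 1, -1}" and h: "h \<in> {0, 1, -1}" and k: "Dmap_grading_op g h = Some k"
  then have "k = - (g + h)" "g = 0 \<or> h = 0"
    by (auto simp: Dmap_grading_op_def split: if_splits)
  then show "k \<in> {0, 1, -1}"
    using g h by auto
  show "Anil x y \<in> (eigsp Dmap (of_int k) :: 'k alg set)"
    if "x \<in> eigsp Dmap (of_int g)" "y \<in> eigsp Dmap (of_int h)" for x y
    using Anil_mem_eigsp_Dmap[OF that] \<open>k = - (g + h)\<close> by simp
qed (rule is_subspace_eigsp[OF Dmap_add Dmap_alg_smul] Dmap_eigen_decomposition[OF assms]
      Dmap_grading_op_iff_nonzero_product[OF assms] | assumption | simp)+

theorem mainTheorem5:
  assumes char: "(2::'k::field) \<noteq> 0"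
  shows "(\<forall>x y z :: 'k alg. Anil (Anil x y) z = Anil x (Anil y z))
    \<and> (\<forall>x y :: 'k alg. Anil x y = Anil y x)
    \<and> (\<forall>x y :: 'k alg. Dmap (Anil x y) = - Anil (Dmap x) y - Anil x (Dmap y))
    \<and> eigsp (Dmap :: 'k alg \<Rightarrow> 'k alg) 0 = {(c, d, 0, 0) | c d. True}
    \<and> eigsp (Dmap :: 'k alg \<Rightarrow> 'k alg) 1 = {(0, 0, v, 0) | v. True}
    \<and> eigsp (Dmap :: 'k alg \<Rightarrow> 'k alg) (-1) = {(0, 0, 0, w) | w. True}
    \<and> (\<exists>op. is_grading (Anil :: 'k alg \<Rightarrow> 'k alg \<Rightarrow> 'k alg) {0, 1, -1 :: int}
              (\<lambda>g. eigsp Dmap (of_int g)) op)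
    \<and> (\<forall>op. is_grading (Anil :: 'k alg \<Rightarrow> 'k alg \<Rightarrow> 'k alg) {0, 1, -1 :: int}
              (\<lambda>g. eigsp Dmap (of_int g)) op \<longrightarrow>
            op 0 0 = Some 0 \<and> op 0 1 = Some (-1) \<and> op 1 0 = Some (-1)
            \<and> op 0 (-1) = Some 1 \<and> op (-1) 0 = Some 1
            \<and> (\<forall>\<iota> :: int \<Rightarrow> 's::semigroup_mult.
                  \<not> semigroup_grading_into {0, 1, -1 :: int} op \<iota>))"
proof (intro conjI allI impI)
  fix op assume "is_grading (Anil :: 'k alg \<Rightarrow> 'k alg \<Rightarrow> 'k alg) {0, 1, -1 :: int}
    (\<lambda>g. eigsp Dmap (of_int g)) op"
  from grading_op_unique[OF this is_grading_Dmap[OF char]]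
  have op: "op g h = Dmap_grading_op g h" if "g \<in> {0, 1, -1}" "h \<in> {0, 1, -1}" for g h
    using that by blast
  show "op 0 0 = Some 0" "op 0 1 = Some (-1)" "op 1 0 = Some (-1)"
    "op 0 (-1) = Some 1" "op (-1) 0 = Some 1"
    by (simp_all add: op Dmap_grading_op_def)
  show "\<not> semigroup_grading_into {0, 1, -1 :: int} op (\<iota> :: int \<Rightarrow> 's::semigroup_mult)" for \<iota>
    by (rule not_semigroup_grading_into[of 0 _ 1 "-1"]) (simp_all add: op Dmap_grading_op_def)
qed (use Anil_assoc Anil_commute Dmap_Anil eigsp_Dmap_0 eigsp_Dmap_1[OF char]
      eigsp_Dmap_minus_1[OF char] is_grading_Dmap[OF char] in blast)+

end
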